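(* Let $(\tau,\ell)$ have law $\rho_0$ and let $\Delta_0=\max\{\ell(v):v\in\tau\}$. Then, as $m\to\infty$, $$\mathbb P(\Delta_0\ge m)\sim\frac{2}{m^2},$$ meaning that the ratio of the two sides tends to 1.
   Context: $\rho_0$ is the law of a Galton–Watson plane tree with offspring law $P(k)=2^{-k-1}$, $k\ge0$, in which the root has label 0 and every other vertex gets its parent's label plus an independent uniform element of $\{-1,0,1\}$. *)

theory Defs
  imports "HOL-Analysis.Analysis" "HOL-Library.Landau_Symbols"
begin

text \<open>Finite labelled plane trees. A vertex is given by the ordered list of its
children; each child carries the label increment (child label minus parent label).
The root has label 0.\<close>
datatype ltree = LT "(int \<times> ltree) list"

fun valid :: "ltree \<Rightarrow> bool" where
  "valid (LT cs) = (\<forall>dc\<in>set cs. fst dc \<in> {-1, 0, 1} \<and> valid (snd dc))"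

text \<open>Probability of a given finite labelled plane tree under rho_0:
each vertex with k children contributes 2^(-k-1) (offspring law) and each
child's increment contributes 1/3 (uniform on {-1,0,1}).\<close>
fun weight :: "ltree \<Rightarrow> real" where
  "weight (LT cs) = (1/2) ^ (length cs + 1) * (1/3) ^ length cs
      * prod_list (map (\<lambda>dc. weight (snd dc)) cs)"

fun maxlab :: "ltree \<Rightarrow> int" where
  "maxlab (LT cs) = Max (insert 0 (set (map (\<lambda>dc. fst dc + maxlab (snd dc)) cs)))"

text \<open>P(Delta_0 \<ge> m) under rho_0 (the critical GW tree is a.s. finite, so its
law is the discrete distribution given by weight on admissible finite trees).\<close>
definition prob_max_ge :: "int \<Rightarrow> real" where
  "prob_max_ge m = infsum weight {t. valid t \<and> maxlab t \<ge> m}"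

end

theory Submission
  imports Defs "HOL-Real_Asymp.Real_Asymp"
begin

text \<open>
  In fact \<open>P(\<Delta>\<^sub>0 \<ge> m) = q m\<close> with \<open>q m = 2 / ((m + 1) * (m + 2))\<close> for every \<open>m \<ge> 0\<close>.
  Conditioning on the root, \<open>p m = P(\<Delta>\<^sub>0 < m)\<close> satisfies \<open>p 0 = 0\<close> and
  \<open>p m = \<phi> ((p (m - 1) + p m + p (m + 1)) / 3)\<close> for \<open>m \<ge> 1\<close>, where \<open>\<phi> s = 1 / (2 - s)\<close> is the
  generating function of the offspring law. For \<open>q = 1 - p\<close> this reads \<open>q m = a / (1 + a)\<close> with
  \<open>a\<close> the average of \<open>q\<close> over \<open>m - 1, m, m + 1\<close>, which the explicit \<open>q\<close> satisfies.
  To avoid measure theory, the trees are exhausted by the finite sets of trees of height \<open>< n\<close>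
  and out-degree \<open>\<le> n\<close>. Induction on \<open>n\<close> along the recursion shows that within such a set the
  mass of trees with maximal label \<open>< m\<close> is at most \<open>1 - q m\<close>, the mass of those with maximal
  label \<open>\<ge> m\<close> is at most \<open>q m\<close>, and the total mass is at least \<open>n / (n + 2)\<close>. Hence the total
  mass is 1, which forces both bounds to be equalities in the limit.
\<close>

text \<open>The generating function \<open>1 / (2 - s)\<close> of the offspring law, truncated at degree \<open>N\<close>.\<close>

definition geom_pgf_trunc :: "nat \<Rightarrow> real \<Rightarrow> real" where
  "geom_pgf_trunc N s = (\<Sum>k\<le>N. s ^ k / 2 ^ Suc k)"

lemma geom_pgf_trunc_closed_form:
  assumes "s \<noteq> 2"
  shows "geom_pgf_trunc N s = (1 - (s / 2) ^ Suc N) / (2 - s)"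
proof -
  have "geom_pgf_trunc N s = (\<Sum>k\<le>N. (s / 2) ^ k) / 2"
    by (simp add: geom_pgf_trunc_def sum_divide_distrib power_divide mult.commute)
  also have "\<dots> = (1 - (s / 2) ^ Suc N) / (2 - s)"
    using assms by (subst sum_gp0) (auto simp: field_simps)
  finally show ?thesis .
qed

lemma geom_pgf_trunc_mono: "0 \<le> s \<Longrightarrow> s \<le> s' \<Longrightarrow> geom_pgf_trunc N s \<le> geom_pgf_trunc N s'"
  unfolding geom_pgf_trunc_def by (intro sum_mono divide_right_mono power_mono) auto

lemma geom_pgf_trunc_le:
  assumes "0 \<le> s" "s < 2"
  shows "geom_pgf_trunc N s \<le> 1 / (2 - s)"
  using assms by (simp add: geom_pgf_trunc_closed_form divide_right_mono)

lemma geom_pgf_trunc_diff_le: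
  assumes "0 \<le> y" "y \<le> x" "x \<le> 1"
  shows "geom_pgf_trunc N x - geom_pgf_trunc N y \<le> (x - y) / (1 + (x - y))"
proof -
  have "(y / 2) ^ Suc N / (2 - y) \<le> (x / 2) ^ Suc N / (2 - x)"
    using assms by (intro frac_le power_mono) auto
  then have "geom_pgf_trunc N x - geom_pgf_trunc N y \<le> 1 / (2 - x) - 1 / (2 - y)"
    using assms by (simp add: geom_pgf_trunc_closed_form diff_divide_distrib)
  also have "\<dots> = (x - y) / ((2 - x) * (2 - y))"
    using assms by (simp add: field_simps)
  also have "\<dots> \<le> (x - y) / (1 + (x - y))"
  proof (rule divide_left_mono)
    \<comment> \<open>\<open>(2 - x) * (2 - y) - (1 + (x - y)) = (1 - x) * (3 - y)\<close>\<close>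
    have "0 \<le> (1 - x) * (3 - y)" using assms by simp
    then show "1 + (x - y) \<le> (2 - x) * (2 - y)" by (simp add: algebra_simps)
  qed (use assms in auto)
  finally show ?thesis .
qed

lemma sum_prod_list_lists_length:
  fixes f :: "'a \<Rightarrow> 'b::comm_semiring_1"
  assumes "finite A"
  shows "(\<Sum>xs | set xs \<subseteq> A \<and> length xs = n. prod_list (map f xs)) = sum f A ^ n"
proof (induction n)
  case 0
  have "{xs. set xs \<subseteq> A \<and> length xs = 0} = {[]}" by auto
  then show ?case by simp
next
  case (Suc n)
  let ?L = "{xs. set xs \<subseteq> A \<and> length xs = n}"
  have "(\<Sum>xs | set xs \<subseteq> A \<and> length xs = Suc n. prod_list (map f xs))
      = (\<Sum>(xs, x)\<in>?L \<times> A. f x * prod_list (map f xs))"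
    unfolding lists_length_Suc_eq by (subst sum.reindex) (auto simp: inj_split_Cons case_prod_beta)
  also have "\<dots> = (\<Sum>xs\<in>?L. prod_list (map f xs)) * sum f A"
    by (simp add: sum.cartesian_product[symmetric] sum_product sum.swap[of _ A] mult.commute)
  finally show ?case using Suc by (simp add: mult.commute)
qed

lemma weight_nonneg: "weight t \<ge> 0"
  by (induction t rule: weight.induct) (auto intro!: mult_nonneg_nonneg prod_list_nonneg)

lemma maxlab_nonneg: "maxlab t \<ge> 0"
  by (cases t) auto

lemma sum_weight_LT_lists:
  assumes "finite C"
  shows "(\<Sum>t\<in>LT ` {cs. set cs \<subseteq> C \<and> length cs \<le> N}. weight t)
       = geom_pgf_trunc N ((\<Sum>c\<in>C. weight (snd c)) / 3)"
proof -
  let ?L = "\<lambda>k. {cs. set cs \<subseteq> C \<and> length cs = k}"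
  have lists_le: "{cs. set cs \<subseteq> C \<and> length cs \<le> N} = (\<Union>k\<le>N. ?L k)" by auto
  have "(\<Sum>t\<in>LT ` {cs. set cs \<subseteq> C \<and> length cs \<le> N}. weight t)
      = (\<Sum>k\<le>N. \<Sum>cs\<in>?L k. weight (LT cs))"
    unfolding lists_le
    by (subst sum.reindex, simp add: inj_on_def, unfold comp_def, rule sum.UNION_disjoint)
       (auto simp: assms finite_lists_length_eq)
  also have "\<dots> = (\<Sum>k\<le>N. (1 / 2) ^ Suc k * (1 / 3) ^ k * (\<Sum>cs\<in>?L k. prod_list (map (\<lambda>c. weight (snd c)) cs)))"
    by (simp add: sum_distrib_left)
  also have "\<dots> = geom_pgf_trunc N ((\<Sum>c\<in>C. weight (snd c)) / 3)"
    unfolding sum_prod_list_lists_length[OF assms] geom_pgf_trunc_def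
    by (simp add: power_divide power_one_over mult_ac)
  finally show ?thesis .
qed

fun trunc_trees :: "nat \<Rightarrow> ltree set" where
  "trunc_trees 0 = {}"
| "trunc_trees (Suc n) = LT ` {cs. set cs \<subseteq> {-1, 0, 1} \<times> trunc_trees n \<and> length cs \<le> Suc n}"

lemma finite_trunc_trees: "finite (trunc_trees n)"
  by (induction n) (auto intro!: finite_lists_length_le)

lemma valid_of_trunc_trees: "t \<in> trunc_trees n \<Longrightarrow> valid t"
  by (induction n arbitrary: t) fastforce+

lemma trunc_trees_mono: "n \<le> k \<Longrightarrow> trunc_trees n \<subseteq> trunc_trees k"
proof (induction n arbitrary: k)
  case (Suc n)
  then obtain k' where "k = Suc k'" "n \<le> k'" by (cases k) auto
  with Suc.IH show ?case by fastforce
qed simp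

lemma valid_in_trunc_trees: "valid t \<Longrightarrow> \<exists>n. t \<in> trunc_trees n"
proof (induction t rule: valid.induct)
  case (1 cs)
  have "\<forall>c\<in>set cs. \<exists>n. snd c \<in> trunc_trees n" using 1 by auto
  then obtain N where N: "\<And>c. c \<in> set cs \<Longrightarrow> snd c \<in> trunc_trees (N c)" by metis
  define n where "n = length cs + (\<Sum>c\<in>set cs. N c)"
  have "snd c \<in> trunc_trees n" if "c \<in> set cs" for c
  proof -
    have "N c \<le> n" using that unfolding n_def by (simp add: member_le_sum trans_le_add2)
    then show ?thesis using N[OF that] trunc_trees_mono by blast
  qed
  with "1.prems" have "set cs \<subseteq> {-1, 0, 1} \<times> trunc_trees n" by fastforce
  moreover have "length cs \<le> Suc n" by (simp add: n_def)
  ultimately have "LT cs \<in> trunc_trees (Suc n)" by simp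
  then show ?case by blast
qed

lemma finite_valid_subset_trunc_trees:
  "finite F \<Longrightarrow> F \<subseteq> {t. valid t} \<Longrightarrow> \<exists>n. F \<subseteq> trunc_trees n"
proof (induction F rule: finite_induct)
  case (insert t F)
  then obtain n k where "F \<subseteq> trunc_trees n" "t \<in> trunc_trees k"
    using valid_in_trunc_trees by (metis insert_subset mem_Collect_eq)
  then have "insert t F \<subseteq> trunc_trees (n + k)"
    using trunc_trees_mono[of n "n + k"] trunc_trees_mono[of k "n + k"] by auto
  then show ?case by blast
qed simp

definition mass :: "nat \<Rightarrow> real" where
  "mass n = sum weight (trunc_trees n)"

definition mass_below :: "nat \<Rightarrow> int \<Rightarrow> real" where
  "mass_below n m = sum weight {t \<in> trunc_trees n. maxlab t < m}"

lemma sum_snd_Sigma: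
  assumes "finite A" "\<And>a. a \<in> A \<Longrightarrow> finite (B a)"
  shows "(\<Sum>c\<in>Sigma A B. f (snd c)) = (\<Sum>a\<in>A. sum f (B a))"
  using assms by (simp add: sum.Sigma case_prod_beta)

lemma mass_Suc: "mass (Suc n) = geom_pgf_trunc (Suc n) (mass n)"
proof -
  have "mass (Suc n) = geom_pgf_trunc (Suc n) ((\<Sum>c\<in>{-1, 0, 1::int} \<times> trunc_trees n. weight (snd c)) / 3)"
    unfolding mass_def trunc_trees.simps by (rule sum_weight_LT_lists) (simp add: finite_trunc_trees)
  also have "(\<Sum>c\<in>{-1, 0, 1::int} \<times> trunc_trees n. weight (snd c)) = 3 * mass n"
    by (simp add: sum_snd_Sigma finite_trunc_trees mass_def)
  finally show ?thesis by simp
qed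

lemma trunc_trees_Suc_below:
  assumes "m > 0"
  shows "{t \<in> trunc_trees (Suc n). maxlab t < m}
     = LT ` {cs. set cs \<subseteq> Sigma {-1, 0, 1} (\<lambda>d. {t \<in> trunc_trees n. maxlab t < m - d})
                 \<and> length cs \<le> Suc n}"
  using assms by (auto simp: image_iff) fastforce+

lemma mass_below_Suc:
  assumes "m > 0"
  shows "mass_below (Suc n) m
       = geom_pgf_trunc (Suc n) ((mass_below n (m - 1) + mass_below n m + mass_below n (m + 1)) / 3)"
proof -
  let ?C = "Sigma {-1, 0, 1} (\<lambda>d. {t \<in> trunc_trees n. maxlab t < m - d})"
  have "mass_below (Suc n) m = geom_pgf_trunc (Suc n) ((\<Sum>c\<in>?C. weight (snd c)) / 3)"
    unfolding mass_below_def trunc_trees_Suc_below[OF assms]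
    by (rule sum_weight_LT_lists) (simp add: finite_trunc_trees)
  also have "(\<Sum>c\<in>?C. weight (snd c)) = mass_below n (m - 1) + mass_below n m + mass_below n (m + 1)"
    by (simp add: sum_snd_Sigma finite_trunc_trees mass_below_def)
  finally show ?thesis .
qed

lemma mass_nonneg: "mass n \<ge> 0"
  unfolding mass_def by (simp add: sum_nonneg weight_nonneg)

lemma mass_below_nonneg: "mass_below n m \<ge> 0"
  unfolding mass_below_def by (simp add: sum_nonneg weight_nonneg)

lemma mass_below_le_mass: "mass_below n m \<le> mass n"
  unfolding mass_below_def mass_def by (rule sum_mono2) (auto simp: finite_trunc_trees weight_nonneg)

lemma mass_below_nonpos:
  assumes "m \<le> 0"
  shows "mass_below n m = 0"
proof -
  have "\<not> maxlab t < m" for t using maxlab_nonneg[of t] assms by linarith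
  then show ?thesis by (simp add: mass_below_def)
qed

lemma mass_le_1: "mass n \<le> 1"
proof (induction n)
  case (Suc n)
  have "mass (Suc n) \<le> 1 / (2 - mass n)"
    unfolding mass_Suc using Suc mass_nonneg by (intro geom_pgf_trunc_le) auto
  also have "\<dots> \<le> 1" using Suc by simp
  finally show ?case .
qed (simp add: mass_def)

lemma quadratic_le_pow2: "(real k + 2) * (real k + 3) \<le> 2 ^ (k + 3)"
proof (induction k)
  case (Suc k)
  have "(real (Suc k) + 2) * (real (Suc k) + 3) \<le> 2 * ((real k + 2) * (real k + 3))"
    by (simp add: algebra_simps)
  also have "\<dots> \<le> 2 ^ (Suc k + 3)" using Suc by (simp add: power_add)
  finally show ?case .
qed simp

text \<open>\<open>n / (n + 2)\<close> is a subsolution of the recursion for \<open>mass\<close>, provided the truncation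
  error \<open>r\<close> of the generating function is small enough; \<open>quadratic_le_pow2\<close> guarantees this.\<close>

lemma mass_lower_bound: "real n / (real n + 2) \<le> mass n"
proof (induction n)
  case (Suc n)
  define a where "a = real n"
  define s where "s = a / (a + 2)"
  define r :: real where "r = (1 / 2) ^ Suc (Suc n)"
  have a: "a \<ge> 0" and s: "0 \<le> s" "s \<le> 1" by (auto simp: a_def s_def)
  have "r * ((a + 2) * (a + 3)) \<le> 2"
    using quadratic_le_pow2[of n] by (simp add: r_def a_def power_one_over field_simps power_add)
  then have "(a + 1) * (a + 4) \<le> (1 - r) * (a + 2) * (a + 3)"
    by (simp add: algebra_simps)
  then have "(a + 1) / (a + 3) \<le> (1 - r) / (2 - s)"
    using a by (simp add: s_def divide_simps)
  also have "\<dots> \<le> geom_pgf_trunc (Suc n) s"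
  proof -
    have "(s / 2) ^ Suc (Suc n) \<le> r"
      unfolding r_def using s by (intro power_mono) auto
    then show ?thesis using s by (simp add: geom_pgf_trunc_closed_form divide_right_mono)
  qed
  also have "\<dots> \<le> mass (Suc n)"
    unfolding mass_Suc using Suc s by (intro geom_pgf_trunc_mono) (auto simp: s_def a_def)
  finally show ?case by (simp add: a_def add.commute)
qed (simp add: mass_nonneg)

definition max_tail :: "int \<Rightarrow> real" where
  "max_tail m = 2 / ((m + 1) * (m + 2))"

lemma max_tail_nonneg: "m \<ge> 0 \<Longrightarrow> max_tail m \<ge> 0"
  unfolding max_tail_def by simp

lemma max_tail_le_1: "m \<ge> 0 \<Longrightarrow> max_tail m \<le> 1"
proof -
  assume "m \<ge> 0"
  then have "1 * 2 \<le> (real_of_int m + 1) * (real_of_int m + 2)" by (intro mult_mono) auto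
  then show ?thesis by (simp add: max_tail_def)
qed

lemma max_tail_fixed_point:
  assumes "m \<ge> 1"
  defines "a \<equiv> (max_tail (m - 1) + max_tail m + max_tail (m + 1)) / 3"
  shows "a / (1 + a) = max_tail m"
proof -
  define x where "x = real_of_int m"
  have x: "x \<ge> 1" using assms by (simp add: x_def)
  then have "0 \<le> x * (x + 3)" by simp
  then have nz: "x \<noteq> 0" "x + 1 \<noteq> 0" "x + 2 \<noteq> 0" "x + 3 \<noteq> 0" "x * (x + 3) + 2 \<noteq> 0"
    using x by linarith+
  have tails: "max_tail (m - 1) = 2 / (x * (x + 1))" "max_tail m = 2 / ((x + 1) * (x + 2))"
    "max_tail (m + 1) = 2 / ((x + 2) * (x + 3))"
    by (simp_all add: max_tail_def x_def algebra_simps)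
  have a_eq: "a = 2 / (x * (x + 3))"
    unfolding a_def tails using nz by (simp add: divide_simps) (simp add: algebra_simps)
  show ?thesis
    unfolding a_eq tails(2) using nz by (simp add: divide_simps) (simp add: algebra_simps)
qed

lemma mass_below_le: "m \<ge> 0 \<Longrightarrow> mass_below n m \<le> 1 - max_tail m"
proof (induction n arbitrary: m)
  case 0
  then show ?case by (simp add: mass_below_def max_tail_le_1)
next
  case (Suc n m)
  show ?case
  proof (cases "m = 0")
    case True
    then show ?thesis by (simp add: mass_below_nonpos max_tail_def)
  next
    case False
    with Suc.prems have m: "m \<ge> 1" and m_pos: "m > 0" by simp_all
    define a where "a = (mass_below n (m - 1) + mass_below n m + mass_below n (m + 1)) / 3"
    define b where "b = (max_tail (m - 1) + max_tail m + max_tail (m + 1)) / 3"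
    have a: "0 \<le> a" unfolding a_def by (simp add: mass_below_nonneg add_nonneg_nonneg)
    have b: "0 \<le> b" unfolding b_def using m by (simp add: max_tail_nonneg)
    have "a \<le> 1 - b"
    proof -
      have "mass_below n (m - 1) \<le> 1 - max_tail (m - 1)" "mass_below n m \<le> 1 - max_tail m"
        "mass_below n (m + 1) \<le> 1 - max_tail (m + 1)"
        using Suc.IH m by simp_all
      then show ?thesis by (simp add: a_def b_def field_simps)
    qed
    have "mass_below (Suc n) m = geom_pgf_trunc (Suc n) a"
      unfolding mass_below_Suc[OF m_pos] a_def ..
    also have "\<dots> \<le> 1 / (2 - a)"
      using a \<open>a \<le> 1 - b\<close> b by (intro geom_pgf_trunc_le) auto
    also have "\<dots> \<le> 1 / (1 + b)"
      using a \<open>a \<le> 1 - b\<close> b by (intro divide_left_mono mult_pos_pos) auto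
    also have "\<dots> = 1 - max_tail m"
      using max_tail_fixed_point[OF m] b by (simp add: b_def field_simps)
    finally show ?thesis .
  qed
qed

lemma mass_above_le: "m \<ge> 0 \<Longrightarrow> mass n - mass_below n m \<le> max_tail m"
proof (induction n arbitrary: m)
  case 0
  then show ?case by (simp add: mass_below_def mass_def max_tail_nonneg)
next
  case (Suc n m)
  show ?case
  proof (cases "m = 0")
    case True
    then show ?thesis using mass_le_1[of "Suc n"] by (simp add: mass_below_nonpos max_tail_def)
  next
    case False
    with Suc.prems have m: "m \<ge> 1" and m_pos: "m > 0" by simp_all
    define a where "a = (mass_below n (m - 1) + mass_below n m + mass_below n (m + 1)) / 3"
    define b where "b = (max_tail (m - 1) + max_tail m + max_tail (m + 1)) / 3"
    have a: "0 \<le> a" "a \<le> mass n"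
      unfolding a_def
      using mass_below_le_mass[of n "m - 1"] mass_below_le_mass[of n m] mass_below_le_mass[of n "m + 1"]
        mass_below_nonneg[of n "m - 1"] mass_below_nonneg[of n m] mass_below_nonneg[of n "m + 1"]
      by auto
    have "mass n - mass_below n (m - 1) \<le> max_tail (m - 1)" "mass n - mass_below n m \<le> max_tail m"
      "mass n - mass_below n (m + 1) \<le> max_tail (m + 1)"
      using Suc.IH m by simp_all
    then have "mass n - a \<le> b" by (simp add: a_def b_def field_simps)
    have "mass (Suc n) - mass_below (Suc n) m \<le> (mass n - a) / (1 + (mass n - a))"
      unfolding mass_Suc mass_below_Suc[OF m_pos] a_def[symmetric] using a mass_le_1 m
      by (intro geom_pgf_trunc_diff_le) auto
    also have "\<dots> \<le> b / (1 + b)"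
      using a \<open>mass n - a \<le> b\<close> by (simp add: divide_simps) (simp add: algebra_simps)
    also have "\<dots> = max_tail m"
      unfolding b_def by (rule max_tail_fixed_point[OF m])
    finally show ?thesis .
  qed
qed

lemma infsum_weight_le:
  assumes "A \<subseteq> {t. valid t}" and "\<And>n. sum weight (A \<inter> trunc_trees n) \<le> B"
  shows "weight summable_on A" and "infsum weight A \<le> B"
proof -
  have finite_le: "sum weight F \<le> B" if F: "finite F" "F \<subseteq> A" for F
  proof -
    obtain n where "F \<subseteq> trunc_trees n"
      using finite_valid_subset_trunc_trees[OF F(1) order_trans[OF F(2) assms(1)]] ..
    with F have "sum weight F \<le> sum weight (A \<inter> trunc_trees n)"
      by (intro sum_mono2) (auto simp: finite_trunc_trees weight_nonneg)
    then show ?thesis using assms(2) by (rule order_trans)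
  qed
  show summable: "weight summable_on A"
  proof (rule nonneg_bdd_above_summable_on)
    show "bdd_above (sum weight ` {F. F \<subseteq> A \<and> finite F})"
      by (rule bdd_aboveI[of _ B]) (auto intro: finite_le)
  qed (rule weight_nonneg)
  show "infsum weight A \<le> B"
    using summable finite_le by (rule infsum_le_finite_sums)
qed

lemma infsum_weight_valid: "weight summable_on {t. valid t}" "infsum weight {t. valid t} = 1"
proof -
  have trunc_valid: "{t. valid t} \<inter> trunc_trees n = trunc_trees n" for n
    using valid_of_trunc_trees by blast
  have le_1: "sum weight ({t. valid t} \<inter> trunc_trees n) \<le> 1" for n
    using mass_le_1[of n] by (simp add: trunc_valid mass_def)
  show summable: "weight summable_on {t. valid t}"
    by (rule infsum_weight_le(1)[OF _ le_1]) simp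
  have "real n / (real n + 2) \<le> infsum weight {t. valid t}" for n
  proof -
    have "mass n \<le> infsum weight {t. valid t}"
      unfolding mass_def using valid_of_trunc_trees
      by (intro finite_sum_le_infsum[OF summable finite_trunc_trees]) (auto simp: weight_nonneg)
    with mass_lower_bound[of n] show ?thesis by linarith
  qed
  moreover have "(\<lambda>n. real n / (real n + 2)) \<longlonglongrightarrow> 1"
    by real_asymp
  ultimately have "1 \<le> infsum weight {t. valid t}"
    by (intro LIMSEQ_le_const2) auto
  moreover have "infsum weight {t. valid t} \<le> 1"
    by (rule infsum_weight_le(2)[OF _ le_1]) simp
  ultimately show "infsum weight {t. valid t} = 1" by linarith
qed

lemma prob_max_ge_eq: "m \<ge> 0 \<Longrightarrow> prob_max_ge m = max_tail m"
proof -
  assume m: "m \<ge> 0"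
  define A where "A = {t. valid t \<and> maxlab t \<ge> m}"
  define B where "B = {t. valid t \<and> maxlab t < m}"
  have valid: "A \<subseteq> {t. valid t}" "B \<subseteq> {t. valid t}" by (auto simp: A_def B_def)
  have "sum weight (A \<inter> trunc_trees n) \<le> max_tail m" for n
  proof -
    have "mass n = sum weight (trunc_trees n \<inter> A) + sum weight (trunc_trees n - A)"
      unfolding mass_def by (rule sum.Int_Diff[OF finite_trunc_trees])
    moreover have "trunc_trees n - A = {t \<in> trunc_trees n. maxlab t < m}"
      using valid_of_trunc_trees by (auto simp: A_def)
    ultimately show ?thesis
      using mass_above_le[OF m, of n] by (simp add: mass_below_def Int_commute)
  qed
  note A = infsum_weight_le[OF valid(1) this]
  have "B \<inter> trunc_trees n = {t \<in> trunc_trees n. maxlab t < m}" for n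
    using valid_of_trunc_trees by (auto simp: B_def)
  then have "sum weight (B \<inter> trunc_trees n) \<le> 1 - max_tail m" for n
    using mass_below_le[OF m] by (simp add: mass_below_def)
  note B = infsum_weight_le[OF valid(2) this]
  have "A \<union> B = {t. valid t}" "A \<inter> B = {}" by (auto simp: A_def B_def)
  then have "infsum weight A + infsum weight B = infsum weight {t. valid t}"
    using infsum_Un_disjoint[OF A(1) B(1)] by simp
  then have "infsum weight A = max_tail m"
    using A B infsum_weight_valid by linarith
  then show ?thesis by (simp add: prob_max_ge_def A_def)
qed

theorem lemma5:
  shows "(\<lambda>m::nat. prob_max_ge (int m)) \<sim>[at_top] (\<lambda>m. 2 / (real m) ^ 2)"
proof -
  have "prob_max_ge (int m) = 2 / ((real m + 1) * (real m + 2))" for m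
    by (simp add: prob_max_ge_eq max_tail_def)
  then show ?thesis by (simp only:) real_asymp
qed

end
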